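(* Let $n\ge1$, $f\in A_{\vec 0}(\mathbb{D}^n)$ and $\alpha\in\mathbb{C}\setminus\{0\}$. Then no non-zero positive measure $\mu\in A_{\vec 0}(\mathbb{D}^n)^\perp$ has support contained in the level set $\{z\in\mathbb{T}^n: f(z)=\alpha\}$.
   Context: $A(\mathbb{D}^n)$ is the polydisc algebra (continuous on $\overline{\mathbb{D}}^n$, holomorphic on $\mathbb{D}^n$), regarded as a subspace of $C(\mathbb{T}^n)$. $A_{\vec 0}(\mathbb{D}^n)=\{z_1\cdots z_n f(z): f\in A(\mathbb{D}^n)\}$. $A_{\vec 0}(\mathbb{D}^n)^\perp$ is the set of complex Borel measures $\mu$ of bounded variation on $\mathbb{T}^n$ with $\int_{\mathbb{T}^n} g\,d\mu=0$ for all $g\in A_{\vec 0}(\mathbb{D}^n)$. *)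

theory Defs
  imports "HOL-Analysis.Analysis"
begin

text \<open>Points of C^n are vectors complex ^ 'n, with 'n a finite (nonempty) index type, so n = CARD('n) \<ge> 1.\<close>

definition torus :: "(complex ^ 'n::finite) set" where
  "torus = {z. \<forall>i. norm (z $ i) = 1}"

definition open_polydisc :: "(complex ^ 'n::finite) set" where
  "open_polydisc = {z. \<forall>i. norm (z $ i) < 1}"

definition closed_polydisc :: "(complex ^ 'n::finite) set" where
  "closed_polydisc = {z. \<forall>i. norm (z $ i) \<le> 1}"

text \<open>Holomorphic in several variables: (real) Frechet differentiable with a complex-linear derivative.\<close>
definition holomorphic_n :: "(complex ^ 'n::finite \<Rightarrow> complex) \<Rightarrow> (complex ^ 'n) set \<Rightarrow> bool" where
  "holomorphic_n f S \<longleftrightarrow>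
     (\<forall>z\<in>S. \<exists>c :: complex ^ 'n. (f has_derivative (\<lambda>h. \<Sum>i\<in>UNIV. c $ i * h $ i)) (at z))"

definition polydisc_algebra :: "(complex ^ 'n::finite \<Rightarrow> complex) set" where
  "polydisc_algebra = {f. continuous_on closed_polydisc f \<and> holomorphic_n f open_polydisc}"

definition polydisc_algebra0 :: "(complex ^ 'n::finite \<Rightarrow> complex) set" where
  "polydisc_algebra0 = {f. \<exists>g\<in>polydisc_algebra. \<forall>z. f z = (\<Prod>i\<in>UNIV. z $ i) * g z}"

definition borel_measure_on_torus :: "(complex ^ 'n::finite) measure \<Rightarrow> bool" where
  "borel_measure_on_torus M \<longleftrightarrow>
     sets M = sets (restrict_space borel (torus :: (complex ^ 'n) set)) \<and> finite_measure M"

definition annihilates_A0 :: "(complex ^ 'n::finite) measure \<Rightarrow> bool" where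
  "annihilates_A0 M \<longleftrightarrow> (\<forall>g\<in>polydisc_algebra0. integral\<^sup>L M g = 0)"

definition msupport :: "'a::metric_space measure \<Rightarrow> 'a set" where
  "msupport M = {z \<in> space M. \<forall>e>0. emeasure M (ball z e \<inter> space M) \<noteq> 0}"

end

theory Submission
  imports Defs
begin

text \<open>
  Such a \<open>\<mu>\<close> annihilates \<open>f\<close> itself. Being concentrated on \<open>{f = \<alpha>}\<close>, it gives
  \<open>0 = \<integral> f d\<mu> = \<alpha> \<mu>(\<T>\<^sup>n)\<close>, so \<open>\<mu> = 0\<close>.
\<close>

lemma AE_in_msupport:
  fixes M :: "'a::{metric_space, second_countable_topology} measure"
  assumes open_sets: "\<And>S. open S \<Longrightarrow> S \<inter> space M \<in> sets M"
  shows "AE x in M. x \<in> msupport M"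
proof -
  define F where
    "F = {ball x e | x e. x \<in> space M \<and> e > 0 \<and> emeasure M (ball x e \<inter> space M) = 0}"
  have "\<And>S. S \<in> F \<Longrightarrow> open S" unfolding F_def by auto
  \<comment> \<open>The union of the null balls is already covered by countably many of them.\<close>
  from Lindelof[OF this] obtain F' where F': "F' \<subseteq> F" "countable F'" "\<Union>F' = \<Union>F"
    by metis
  have null: "(\<Union>S\<in>F'. S \<inter> space M) \<in> null_sets M"
  proof (rule null_sets_UN')
    fix S assume "S \<in> F'"
    with F'(1) obtain x e where "S = ball x e" "emeasure M (ball x e \<inter> space M) = 0"
      unfolding F_def by auto
    with open_sets show "S \<inter> space M \<in> null_sets M" by auto
  qed fact
  show ?thesis
  proof (rule AE_I'[OF null], safe)
    fix x assume x: "x \<in> space M" "x \<notin> msupport M"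
    then obtain e where "e > 0" "emeasure M (ball x e \<inter> space M) = 0"
      unfolding msupport_def by auto
    with x have "ball x e \<in> F" unfolding F_def by auto
    with \<open>e > 0\<close> have "x \<in> \<Union>F" by (meson UnionI centre_in_ball)
    with F'(3) x show "x \<in> (\<Union>S\<in>F'. S \<inter> space M)" by auto
  qed
qed

lemma integral_AE_eq_const:
  assumes "finite_measure M" "f \<in> borel_measurable M" "AE x in M. f x = c"
  shows "integral\<^sup>L M f = measure M (space M) *\<^sub>R (c :: 'b::{banach, second_countable_topology})"
proof -
  have "integral\<^sup>L M f = integral\<^sup>L M (\<lambda>_. c)"
    by (rule integral_cong_AE[OF assms(2) _ assms(3)]) simp
  then show ?thesis by simp
qed

lemma
  fixes M :: "(complex ^ 'n::finite) measure"
  assumes "borel_measure_on_torus M"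
  shows space_borel_measure_on_torus: "space M = torus"
    and open_Int_space_in_sets: "open S \<Longrightarrow> S \<inter> space M \<in> sets M"
    and borel_measurable_continuous_on_torus:
      "continuous_on torus f \<Longrightarrow> f \<in> borel_measurable M"
proof -
  have sets_M: "sets M = sets (restrict_space borel torus)"
    using assms unfolding borel_measure_on_torus_def by simp
  then show space_M: "space M = torus"
    using sets_eq_imp_space_eq[OF sets_M] by (simp add: space_restrict_space)
  show "open S \<Longrightarrow> S \<inter> space M \<in> sets M"
    unfolding sets_M space_M sets_restrict_space by (auto simp: Int_commute)
  show "continuous_on torus f \<Longrightarrow> f \<in> borel_measurable M"
    using borel_measurable_continuous_on_restrict measurable_cong_sets[OF sets_M refl] by blast
qed

lemma torus_subset_closed_polydisc: "torus \<subseteq> closed_polydisc"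
  unfolding torus_def closed_polydisc_def by auto

lemma continuous_on_polydisc_algebra0:
  assumes "f \<in> polydisc_algebra0"
  shows "continuous_on closed_polydisc f"
proof -
  obtain g where g: "g \<in> polydisc_algebra" "\<And>z. f z = (\<Prod>i\<in>UNIV. z $ i) * g z"
    using assms unfolding polydisc_algebra0_def by auto
  have "continuous_on closed_polydisc (\<lambda>z. (\<Prod>i\<in>UNIV. z $ i) * g z)"
    using g(1) unfolding polydisc_algebra_def by (auto intro!: continuous_intros)
  then show ?thesis using g(2) by presburger
qed

theorem mainTheorem2:
  fixes f :: "complex ^ 'n::finite \<Rightarrow> complex" and \<alpha> :: complex
  assumes "f \<in> polydisc_algebra0" and "\<alpha> \<noteq> 0"
  shows "\<not> (\<exists>M :: (complex ^ 'n) measure.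
            borel_measure_on_torus M \<and> emeasure M (space M) \<noteq> 0 \<and> annihilates_A0 M \<and>
            msupport M \<subseteq> {z \<in> torus. f z = \<alpha>})"
proof
  assume "\<exists>M :: (complex ^ 'n) measure.
            borel_measure_on_torus M \<and> emeasure M (space M) \<noteq> 0 \<and> annihilates_A0 M \<and>
            msupport M \<subseteq> {z \<in> torus. f z = \<alpha>}"
  then obtain M :: "(complex ^ 'n) measure" where M: "borel_measure_on_torus M"
    and nonzero: "emeasure M (space M) \<noteq> 0" and "annihilates_A0 M"
    and supp: "msupport M \<subseteq> {z \<in> torus. f z = \<alpha>}" by blast
  have finite: "finite_measure M" using M unfolding borel_measure_on_torus_def by simp
  have AE_eq: "AE x in M. f x = \<alpha>"
    using AE_in_msupport[OF open_Int_space_in_sets[OF M]] supp by (auto elim!: AE_mp)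
  have measurable: "f \<in> borel_measurable M"
    using continuous_on_polydisc_algebra0[OF assms(1)] torus_subset_closed_polydisc
    by (blast intro: borel_measurable_continuous_on_torus[OF M] continuous_on_subset)
  have "integral\<^sup>L M f = measure M (space M) *\<^sub>R \<alpha>"
    using integral_AE_eq_const[OF finite measurable AE_eq] .
  moreover have "integral\<^sup>L M f = 0"
    using \<open>annihilates_A0 M\<close> assms(1) unfolding annihilates_A0_def by blast
  ultimately have "measure M (space M) = 0" using assms(2) by simp
  with nonzero finite show False
    by (simp add: finite_measure.emeasure_eq_measure)
qed

end
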